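(* Let $\eta>0$, $y>0$, $\tilde x>0$, set $k=\eta\tilde x$ and $\eta_c=\frac{1}{\tilde x y}$, and let $M(\Delta f)=\Delta f\left(1-2k(\Delta f+y)+k^2\Delta f(\Delta f+y)\right)$. The fixed points of $M$ are $0$, $-y$, $2/k$. The remaining six solutions of $M(M(\Delta f))=\Delta f$ are $$\Delta f=\frac{k(1-ky)\pm\sqrt{k^2(ky-1)(ky+3)}}{2k^2}$$ and four further roots whose expression involves $h=\sqrt{-7+ky(2+ky)}$, which are non-real when $ky<2\sqrt2-1$. In particular, the two points $\frac{k(1-ky)\pm\sqrt{k^2(ky-1)(ky+3)}}{2k^2}$ form a real period-two orbit of $M$ consisting of two distinct points if and only if $\eta>\eta_c$, and $M$ has no real period-two orbit when $\eta\le\eta_c$.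
   Context: $\tilde x=\|\bm x\|/\sqrt{n_{\mathrm{eff}}}$. The map $M$ is the restriction of the UV model's function-space gradient descent dynamics to the invariant EoS manifold $\lambda=2\tilde x(\Delta f+y)$, written in terms of the residual $\Delta f$. *)

theory Defs
  imports "HOL-Analysis.Analysis"
begin

definition Mmap :: "'a::field \<Rightarrow> 'a \<Rightarrow> 'a \<Rightarrow> 'a" where
  "Mmap k y d = d * (1 - 2 * k * (d + y) + k^2 * d * (d + y))"

definition dplus :: "real \<Rightarrow> real \<Rightarrow> complex" where
  "dplus k y = (complex_of_real (k * (1 - k * y))
      + csqrt (complex_of_real (k^2 * (k * y - 1) * (k * y + 3)))) / complex_of_real (2 * k^2)"

definition dminus :: "real \<Rightarrow> real \<Rightarrow> complex" where
  "dminus k y = (complex_of_real (k * (1 - k * y))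
      - csqrt (complex_of_real (k^2 * (k * y - 1) * (k * y + 3)))) / complex_of_real (2 * k^2)"

end

theory Submission imports Defs begin

text \<open>In the variables t = k d and u = k y, a period-two point of M that is not a fixed point
  is a root either of a quadratic (whose roots are dplus and dminus) or of a quartic.
  For u < 2 sqrt 2 - 1 the quartic is a sum of two squares, one of them with positive weight
  7 - 2u - u^2, so it has no real root. The quadratic has two distinct real roots exactly when
  its discriminant (u - 1)(u + 3) is positive, i.e. when eta > eta_c; on its roots
  k M(d) + k d = 1 - k y, so M exchanges the two roots.\<close>

definition two_cycle_quadratic :: "'a::comm_ring_1 \<Rightarrow> 'a \<Rightarrow> 'a" where
  "two_cycle_quadratic u t = t^2 - (1 - u) * t + (1 - u)"

definition two_cycle_quartic :: "'a::comm_ring_1 \<Rightarrow> 'a \<Rightarrow> 'a" where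
  "two_cycle_quartic u t = t^4 + (u - 3) * t^3 + (3 - 3 * u) * t^2 + (2 * u - 2) * t + 2"

lemma Mmap_minus_self: "Mmap k y d - d = k * d * (d + y) * (k * d - 2)"
  unfolding Mmap_def by algebra

lemma Mmap_eq_self_iff:
  fixes k y d :: "'a::field"
  assumes "k \<noteq> 0"
  shows "Mmap k y d = d \<longleftrightarrow> d \<in> {0, -y, 2 / k}"
proof -
  have "Mmap k y d = d \<longleftrightarrow> d = 0 \<or> d + y = 0 \<or> k * d - 2 = 0"
    using Mmap_minus_self[of k y d] assms by (metis eq_iff_diff_eq_0 mult_eq_0_iff)
  also have "\<dots> \<longleftrightarrow> d \<in> {0, -y, 2 / k}"
    using assms by (auto simp: field_simps eq_neg_iff_add_eq_0)
  finally show ?thesis .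
qed

lemma Mmap_Mmap_minus_self:
  "k * (Mmap k y (Mmap k y d) - d) = k * (Mmap k y d - d)
     * two_cycle_quadratic (k * y) (k * d) * two_cycle_quartic (k * y) (k * d)"
  unfolding Mmap_def two_cycle_quadratic_def two_cycle_quartic_def by algebra

lemma Mmap_add_self:
  "k * Mmap k y d + k * d - (1 - k * y) = (k * d - 1) * two_cycle_quadratic (k * y) (k * d)"
  unfolding Mmap_def two_cycle_quadratic_def by algebra

lemma two_cycle_quartic_pos:
  fixes u t :: real
  assumes "u^2 + 2 * u - 7 < 0"
  shows "two_cycle_quartic u t > 0"
proof -
  define A where "A = t^2 + (u - 3) / 2 * t - (u + 1) / 2"
  have sos: "two_cycle_quartic u t = A^2 + (7 - 2 * u - u^2) * (t - 1)^2 / 4"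
    unfolding A_def two_cycle_quartic_def
    by (simp add: field_simps power2_eq_square power4_eq_xxxx power3_eq_cube)
  show ?thesis
  proof (cases "t = 1")
    case True
    then have "A = -1" unfolding A_def by (simp add: field_simps)
    with sos True show ?thesis by simp
  next
    case False
    then have "(7 - 2 * u - u^2) * (t - 1)^2 > 0" using assms by (intro mult_pos_pos) auto
    with sos show ?thesis using zero_le_power2[of A] by linarith
  qed
qed

lemma square_add_double_lt_seven:
  fixes u :: real
  assumes "-1 \<le> u" and "u < 2 * sqrt 2 - 1"
  shows "u^2 + 2 * u - 7 < 0"
proof -
  have "(u + 1)^2 < (2 * sqrt 2)^2" using assms by (intro power_strict_mono) auto
  then show ?thesis by (simp add: power2_eq_square algebra_simps)
qed

lemma two_cycle_quadratic_eq_0_real: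
  fixes u t :: real
  assumes "two_cycle_quadratic u t = 0" and "-3 < u" and "u \<le> 1"
  shows "u = 1 \<and> t = 0"
proof -
  have "(t - (1 - u) / 2)^2 + (1 - u) * (3 + u) / 4 = 0"
    using assms(1) unfolding two_cycle_quadratic_def by (simp add: field_simps power2_eq_square)
  moreover have "(1 - u) * (3 + u) / 4 \<ge> 0" using assms(2,3) by simp
  ultimately have "(t - (1 - u) / 2)^2 = 0" "(1 - u) * (3 + u) = 0"
    using zero_le_power2[of "t - (1 - u) / 2"] by linarith+
  with assms(2,3) show ?thesis by auto
qed

lemma two_cycle_quadratic_factor:
  fixes K Y S z :: "'a::field_char_0"
  assumes "K \<noteq> 0" and "S^2 = K^2 * (K * Y - 1) * (K * Y + 3)"
  shows "two_cycle_quadratic (K * Y) (K * z)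
    = K^2 * (z - (K * (1 - K * Y) + S) / (2 * K^2)) * (z - (K * (1 - K * Y) - S) / (2 * K^2))"
proof -
  have "K^2 * (z - (K * (1 - K * Y) + S) / (2 * K^2)) * (z - (K * (1 - K * Y) - S) / (2 * K^2))
     = ((2 * K^2 * z - K * (1 - K * Y))^2 - S^2) / (4 * K^2)"
    using assms(1) by (simp add: field_simps power2_eq_square)
  also have "\<dots> = two_cycle_quadratic (K * Y) (K * z)"
    using assms unfolding two_cycle_quadratic_def by (simp add: field_simps power2_eq_square)
  finally show ?thesis by simp
qed

lemma real_period_two_point_cases:
  fixes k y d :: real
  assumes "(k * y)^2 + 2 * (k * y) - 7 < 0" and "k \<noteq> 0" and "Mmap k y (Mmap k y d) = d"
  shows "Mmap k y d = d \<or> two_cycle_quadratic (k * y) (k * d) = 0"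
  using Mmap_Mmap_minus_self[of k y d] two_cycle_quartic_pos[OF assms(1), of "k * d"] assms(2,3)
  by auto

lemma no_real_period_two_orbit:
  fixes k y d :: real
  assumes "k \<noteq> 0" and "-3 < k * y" and "k * y \<le> 1" and "Mmap k y (Mmap k y d) = d"
  shows "Mmap k y d = d"
proof -
  have "\<bar>k * y + 1\<bar> \<le> 2" using assms(2,3) by linarith
  then have "(k * y + 1)^2 \<le> 2^2" by (metis abs_ge_zero power2_abs power_mono)
  then have "(k * y)^2 + 2 * (k * y) - 7 < 0" by (simp add: power2_eq_square algebra_simps)
  with assms have "Mmap k y d = d \<or> two_cycle_quadratic (k * y) (k * d) = 0"
    using real_period_two_point_cases by blast
  then show ?thesis
    using two_cycle_quadratic_eq_0_real[of "k * y" "k * d"] assms unfolding Mmap_def by auto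
qed

lemma Mmap_of_real:
  "Mmap (of_real k) (of_real y) (of_real d) = (of_real (Mmap k y d) :: 'a::real_field)"
  unfolding Mmap_def by simp

lemma two_cycle_quadratic_of_real:
  "two_cycle_quadratic (of_real u) (of_real t) = (of_real (two_cycle_quadratic u t) :: 'a::real_field)"
  unfolding two_cycle_quadratic_def by simp

lemma dplus_eq:
  "dplus k y = (of_real k * (1 - of_real k * of_real y)
     + csqrt (of_real (k^2 * (k * y - 1) * (k * y + 3)))) / (2 * (of_real k)^2)"
  unfolding dplus_def by simp

lemma dminus_eq:
  "dminus k y = (of_real k * (1 - of_real k * of_real y)
     - csqrt (of_real (k^2 * (k * y - 1) * (k * y + 3)))) / (2 * (of_real k)^2)"
  unfolding dminus_def by simp

lemma two_cycle_quadratic_eq_0_iff: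
  assumes "k \<noteq> 0"
  shows "two_cycle_quadratic (of_real k * of_real y) (of_real k * z) = 0
    \<longleftrightarrow> z = dplus k y \<or> z = dminus k y"
  using assms two_cycle_quadratic_factor[of "of_real k" "csqrt (of_real (k^2 * (k * y - 1) * (k * y + 3)))"]
  by (simp add: dplus_eq dminus_eq)

lemma dplus_add_dminus:
  assumes "k \<noteq> 0"
  shows "dplus k y + dminus k y = (1 - of_real k * of_real y) / of_real k"
  unfolding dplus_eq dminus_eq using assms by (simp add: field_simps power2_eq_square)

lemma Mmap_eq_on_two_cycle_root:
  fixes K Y z :: "'a::field"
  assumes "K \<noteq> 0" and "two_cycle_quadratic (K * Y) (K * z) = 0"
  shows "Mmap K Y z = (1 - K * Y) / K - z"
  using Mmap_add_self[of K Y z] assms by (simp add: field_simps)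

lemma Mmap_dplus:
  assumes "k \<noteq> 0"
  shows "Mmap (of_real k) (of_real y) (dplus k y) = dminus k y"
proof -
  have "two_cycle_quadratic (of_real k * of_real y) (of_real k * dplus k y) = 0"
    using two_cycle_quadratic_eq_0_iff[OF assms] by simp
  then show ?thesis
    using Mmap_eq_on_two_cycle_root dplus_add_dminus[OF assms] assms
    by (metis add_diff_cancel_left' of_real_eq_0_iff)
qed

lemma Mmap_dminus:
  assumes "k \<noteq> 0"
  shows "Mmap (of_real k) (of_real y) (dminus k y) = dplus k y"
proof -
  have "two_cycle_quadratic (of_real k * of_real y) (of_real k * dminus k y) = 0"
    using two_cycle_quadratic_eq_0_iff[OF assms] by simp
  then show ?thesis
    using Mmap_eq_on_two_cycle_root dplus_add_dminus[OF assms] assms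
    by (metis add_diff_cancel_right' of_real_eq_0_iff)
qed

lemma dplus_dminus_real_distinct_iff:
  assumes "k \<noteq> 0" and "-3 < k * y"
  shows "dplus k y \<in> \<real> \<and> dminus k y \<in> \<real> \<and> dplus k y \<noteq> dminus k y \<longleftrightarrow> k * y > 1"
proof -
  define D where "D = k^2 * (k * y - 1) * (k * y + 3)"
  have D_pos_iff: "D > 0 \<longleftrightarrow> k * y > 1"
    using assms unfolding D_def by (auto simp: zero_less_mult_iff)
  have csqrt_eq: "csqrt (of_real D) = (of_real k)^2 * (dplus k y - dminus k y)"
    unfolding dplus_eq dminus_eq D_def using assms(1) by (simp add: field_simps)
  show ?thesis
  proof
    assume real_distinct: "dplus k y \<in> \<real> \<and> dminus k y \<in> \<real> \<and> dplus k y \<noteq> dminus k y"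
    then have "csqrt (of_real D) \<in> \<real>" unfolding csqrt_eq by auto
    then obtain s where s: "csqrt (of_real D) = of_real s" by (auto elim: Reals_cases)
    have "s \<noteq> 0" using s csqrt_eq real_distinct assms(1) by auto
    have "of_real (s^2) = (of_real D :: complex)"
      using s power2_csqrt[of "of_real D"] by simp
    then have "s^2 = D" by (simp only: of_real_eq_iff)
    with \<open>s \<noteq> 0\<close> D_pos_iff show "k * y > 1" by (metis zero_less_power2)
  next
    assume "k * y > 1"
    then have "D > 0" using D_pos_iff by simp
    then have csqrt_real: "csqrt (of_real D) = of_real (sqrt D)" by (simp add: csqrt_of_real)
    have "dplus k y \<noteq> dminus k y" using csqrt_eq csqrt_real \<open>D > 0\<close> by auto
    moreover have "dplus k y \<in> \<real>" "dminus k y \<in> \<real>"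
      using csqrt_real unfolding dplus_eq dminus_eq D_def by simp_all
    ultimately show "dplus k y \<in> \<real> \<and> dminus k y \<in> \<real> \<and> dplus k y \<noteq> dminus k y" by simp
  qed
qed

lemma real_period_two_points:
  assumes "k \<noteq> 0" and "(k * y)^2 + 2 * (k * y) - 7 < 0"
    and "z \<in> \<real>" and "Mmap (of_real k) (of_real y) (Mmap (of_real k) (of_real y) z) = z"
  shows "z \<in> {0, - of_real y, of_real (2 / k), dplus k y, dminus k y}"
proof -
  obtain d where z: "z = of_real d" using assms(3) by (auto elim: Reals_cases)
  then have "Mmap k y (Mmap k y d) = d" using assms(4) by (simp add: Mmap_of_real)
  then have "Mmap k y d = d \<or> two_cycle_quadratic (k * y) (k * d) = 0"
    using real_period_two_point_cases assms(1,2) by blast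
  then show ?thesis
  proof
    assume "Mmap k y d = d"
    then show ?thesis using Mmap_eq_self_iff[OF assms(1)] z by auto
  next
    assume "two_cycle_quadratic (k * y) (k * d) = 0"
    then have "two_cycle_quadratic (of_real k * of_real y) (of_real k * z) = 0"
      using two_cycle_quadratic_of_real[of "k * y" "k * d"] z by simp
    then show ?thesis using two_cycle_quadratic_eq_0_iff[OF assms(1)] by auto
  qed
qed

theorem mainTheorem9:
  fixes eta y xt k eta_c :: real
  assumes "eta > 0" and "y > 0" and "xt > 0"
    and "k = eta * xt" and "eta_c = 1 / (xt * y)"
  shows "(\<forall>d::real. Mmap k y d = d \<longleftrightarrow> d \<in> {0, -y, 2 / k})
    \<and> Mmap (complex_of_real k) (complex_of_real y)
          (Mmap (complex_of_real k) (complex_of_real y) (dplus k y)) = dplus k y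
    \<and> Mmap (complex_of_real k) (complex_of_real y)
          (Mmap (complex_of_real k) (complex_of_real y) (dminus k y)) = dminus k y
    \<and> (\<forall>z::complex.
          Mmap (complex_of_real k) (complex_of_real y) (Mmap (complex_of_real k) (complex_of_real y) z) = z
          \<and> z \<notin> {0, - complex_of_real y, complex_of_real (2 / k), dplus k y, dminus k y}
          \<and> k * y < 2 * sqrt 2 - 1
          \<longrightarrow> z \<notin> \<real>)
    \<and> ((dplus k y \<in> \<real> \<and> dminus k y \<in> \<real> \<and> dplus k y \<noteq> dminus k y
          \<and> Mmap (complex_of_real k) (complex_of_real y) (dplus k y) = dminus k y
          \<and> Mmap (complex_of_real k) (complex_of_real y) (dminus k y) = dplus k y)
        \<longleftrightarrow> eta > eta_c)
    \<and> (eta \<le> eta_c \<longrightarrow> \<not> (\<exists>d::real. Mmap k y (Mmap k y d) = d \<and> Mmap k y d \<noteq> d))"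
proof -
  have "k > 0" and ky_pos: "k * y > 0" using assms by simp_all
  then have k: "k \<noteq> 0" by simp
  have eta_iff: "eta > eta_c \<longleftrightarrow> k * y > 1"
    using assms by (simp add: pos_divide_less_eq ac_simps)
  have non_real: "z \<notin> \<real>"
    if "Mmap (of_real k) (of_real y) (Mmap (of_real k) (of_real y) z) = z"
      and "z \<notin> {0, - of_real y, of_real (2 / k), dplus k y, dminus k y}"
      and "k * y < 2 * sqrt 2 - 1" for z :: complex
    using real_period_two_points[OF k square_add_double_lt_seven[OF _ that(3)] _ that(1)] that(2) ky_pos
    by force
  have "-3 < k * y" using ky_pos by simp
  have no_two_cycle: "\<not> (\<exists>d. Mmap k y (Mmap k y d) = d \<and> Mmap k y d \<noteq> d)" if "eta \<le> eta_c"
    using no_real_period_two_orbit[OF k \<open>-3 < k * y\<close>] that eta_iff by auto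
  have period_two_iff:
    "(dplus k y \<in> \<real> \<and> dminus k y \<in> \<real> \<and> dplus k y \<noteq> dminus k y
       \<and> Mmap (of_real k) (of_real y) (dplus k y) = dminus k y
       \<and> Mmap (of_real k) (of_real y) (dminus k y) = dplus k y) \<longleftrightarrow> eta > eta_c"
    using dplus_dminus_real_distinct_iff[OF k \<open>-3 < k * y\<close>] Mmap_dplus[OF k] Mmap_dminus[OF k]
      eta_iff by simp
  show ?thesis
    using Mmap_eq_self_iff[OF k, of y] Mmap_dplus[OF k, of y] Mmap_dminus[OF k, of y]
      non_real period_two_iff no_two_cycle
    by (intro conjI allI impI) simp_all
qed

end
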